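(* Let $P$ be a poset and let $\overline{down(P)}$ denote the topological closure of $down(P)=\{\downarrow x: x\in P\}$ in $\mathfrak{P}(P)$. Then $down(P)\subseteq \mathcal{J}(P)\subseteq \overline{down(P)}\setminus\{\emptyset\}$. In particular, $down(P)$ and $\mathcal{J}(P)$ have the same topological closure in $\mathfrak{P}(P)$.
   Context: $\mathfrak{P}(P)$ is the power set of $P$ with the topology whose basic open sets are $O(F,G)=\{X\subseteq P: F\subseteq X,\ G\cap X=\emptyset\}$ for finite $F,G\subseteq P$. $\mathcal{J}(P)$ is the set of ideals of $P$: nonempty initial segments (closed downward) which are up-directed. $\downarrow x=\{y\in P:y\leq x\}$. *)

theory Defs
  imports "HOL-Analysis.Analysis"
begin

text \<open>The poset is a carrier set P inside a type with a partial order.\<close>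

definition basic_open :: "'a set \<Rightarrow> 'a set \<Rightarrow> 'a set \<Rightarrow> 'a set set" where
  "basic_open P F G = {X. X \<subseteq> P \<and> F \<subseteq> X \<and> G \<inter> X = {}}"

definition powerset_top :: "'a set \<Rightarrow> 'a set topology" where
  "powerset_top P = topology_generated_by
     {basic_open P F G | F G. finite F \<and> finite G \<and> F \<subseteq> P \<and> G \<subseteq> P}"

definition down_set :: "'a::order set \<Rightarrow> 'a \<Rightarrow> 'a set" where
  "down_set P x = {y \<in> P. y \<le> x}"

definition downs :: "'a::order set \<Rightarrow> 'a set set" where
  "downs P = {down_set P x | x. x \<in> P}"

definition ideals :: "'a::order set \<Rightarrow> 'a set set" where
  "ideals P = {I. I \<subseteq> P \<and> I \<noteq> {}
     \<and> (\<forall>x\<in>I. \<forall>y\<in>P. y \<le> x \<longrightarrow> y \<in> I)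
     \<and> (\<forall>x\<in>I. \<forall>y\<in>I. \<exists>z\<in>I. x \<le> z \<and> y \<le> z)}"

end

theory Submission
  imports Defs
begin

text \<open>Conversely, an ideal I is a limit of the down-sets
  of its elements: a basic neighbourhood O(F,G) of I has F \<subseteq> I and G disjoint from I, so the
  down-set of any z \<in> I above an upper bound of the finite set F (which exists by directedness)
  lies in O(F,G). Directedness of I also makes "for all large enough z \<in> I" stable under finite
  intersections, so this extends from basic open sets to all open sets. The two closures then
  coincide by monotonicity and idempotence of closure.\<close>

lemma down_set_in_ideals:
  fixes P :: "'a::order set"
  assumes "x \<in> P"
  shows "down_set P x \<in> ideals P"
  using assms unfolding ideals_def down_set_def by (auto intro: order_trans)

lemma downs_subset_ideals: "downs P \<subseteq> ideals P"
  unfolding downs_def by (auto intro: down_set_in_ideals)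

lemma down_set_subset_ideal:
  assumes "I \<in> ideals P" "z \<in> I"
  shows "down_set P z \<subseteq> I"
  using assms unfolding ideals_def down_set_def by auto

lemma ideal_directed:
  assumes "I \<in> ideals P" "x \<in> I" "y \<in> I"
  obtains z where "z \<in> I" "x \<le> z" "y \<le> z"
proof -
  have "\<forall>x\<in>I. \<forall>y\<in>I. \<exists>z\<in>I. x \<le> z \<and> y \<le> z"
    using assms(1) by (simp add: ideals_def)
  then show ?thesis using assms(2,3) that by blast
qed

lemma ideal_finite_upper_bound:
  assumes I: "I \<in> ideals P" and "finite F" "F \<subseteq> I"
  shows "\<exists>a\<in>I. \<forall>f\<in>F. f \<le> a"
  using \<open>finite F\<close> \<open>F \<subseteq> I\<close>
proof (induction F)
  case empty
  then show ?case using I unfolding ideals_def by auto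
next
  case (insert f F)
  then obtain a where "a \<in> I" "\<forall>f\<in>F. f \<le> a" by auto
  moreover obtain w where "w \<in> I" "a \<le> w" "f \<le> w"
    using ideal_directed[OF I \<open>a \<in> I\<close>] insert.prems by blast
  ultimately show ?case by (auto intro: order_trans)
qed

lemma topspace_powerset_top: "topspace (powerset_top P) = Pow P"
proof -
  have "basic_open P {} {} = Pow P" unfolding basic_open_def by auto
  then show ?thesis
    unfolding powerset_top_def basic_open_def by auto
qed

lemma down_set_in_basic_open:
  assumes "I \<in> ideals P" "I \<in> basic_open P F G" "F \<subseteq> P"
    and "z \<in> I" "\<forall>f\<in>F. f \<le> z"
  shows "down_set P z \<in> basic_open P F G"
  using assms down_set_subset_ideal[OF assms(1,4)]
  unfolding basic_open_def down_set_def by auto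

lemma ideal_eventually_down_set_in_open:
  assumes I: "I \<in> ideals P" and T: "openin (powerset_top P) T" "I \<in> T"
  shows "\<exists>a\<in>I. \<forall>z\<in>I. a \<le> z \<longrightarrow> down_set P z \<in> T"
proof -
  have "generate_topology_on
      {basic_open P F G | F G. finite F \<and> finite G \<and> F \<subseteq> P \<and> G \<subseteq> P} T"
    using T(1) unfolding powerset_top_def openin_topology_generated_by_iff .
  then show ?thesis
    using T(2)
  proof (induction T)
    case Empty
    then show ?case by simp
  next
    case (Int S T)
    then obtain x y where
      x: "x \<in> I" "\<forall>z\<in>I. x \<le> z \<longrightarrow> down_set P z \<in> S" and
      y: "y \<in> I" "\<forall>z\<in>I. y \<le> z \<longrightarrow> down_set P z \<in> T"
      by auto
    obtain w where "w \<in> I" "x \<le> w" "y \<le> w"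
      using ideal_directed[OF I x(1) y(1)] .
    then show ?case using x y by (auto intro: order_trans)
  next
    case (UN K)
    then show ?case by blast
  next
    case (Basis S)
    then obtain F G where S: "S = basic_open P F G" "finite F" "F \<subseteq> P"
      by auto
    have "F \<subseteq> I" using Basis.prems S(1) unfolding basic_open_def by auto
    then obtain a where "a \<in> I" "\<forall>f\<in>F. f \<le> a"
      using ideal_finite_upper_bound[OF I S(2)] by blast
    moreover have "down_set P z \<in> S" if "z \<in> I" "a \<le> z" for z
    proof -
      have "\<forall>f\<in>F. f \<le> z" using \<open>\<forall>f\<in>F. f \<le> a\<close> \<open>a \<le> z\<close> by (auto intro: order_trans)
      then show ?thesis
        using down_set_in_basic_open[OF I] Basis.prems S \<open>z \<in> I\<close> by blast
    qed
    ultimately show ?case by blast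
  qed
qed

lemma ideal_in_closure_downs:
  assumes I: "I \<in> ideals P"
  shows "I \<in> powerset_top P closure_of downs P"
  unfolding closure_of_def
proof (intro CollectI conjI allI impI)
  show "I \<in> topspace (powerset_top P)"
    using I unfolding topspace_powerset_top ideals_def by auto
next
  fix T
  assume "I \<in> T \<and> openin (powerset_top P) T"
  then obtain a where "a \<in> I" "down_set P a \<in> T"
    using ideal_eventually_down_set_in_open[OF I] by blast
  moreover have "a \<in> P" using I \<open>a \<in> I\<close> unfolding ideals_def by auto
  ultimately show "\<exists>D\<in>downs P. D \<in> T" unfolding downs_def by auto
qed

lemma ideals_subset_closure_downs:
  "ideals P \<subseteq> (powerset_top P closure_of downs P) - {{}}"
  using ideal_in_closure_downs unfolding ideals_def by auto

theorem lemma3p2: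
  fixes P :: "'a::order set"
  shows "downs P \<subseteq> ideals P
       \<and> ideals P \<subseteq> (powerset_top P closure_of downs P) - {{}}
       \<and> powerset_top P closure_of downs P = powerset_top P closure_of ideals P"
proof -
  let ?cl = "(closure_of) (powerset_top P)"
  have "?cl (downs P) \<subseteq> ?cl (ideals P)"
    using downs_subset_ideals by (rule closure_of_mono)
  moreover have "?cl (ideals P) \<subseteq> ?cl (?cl (downs P))"
    using ideals_subset_closure_downs by (intro closure_of_mono) auto
  ultimately have "?cl (downs P) = ?cl (ideals P)" by simp
  with downs_subset_ideals ideals_subset_closure_downs show ?thesis by blast
qed

end
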